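(* For all integers $n\geq 1$ and $0\leq m\leq n$, \[ K_q(n,m)=\sum_{w\in\mathcal{K}(m,n-m+1)} q^{\mathrm{inv}(w)}=\sum_{w\in\overline{\mathcal{K}}(m,n-m+1)} q^{\mathrm{maj}(w)}. \]
   Context: For integers $n\ge m\ge 0$ the Gaussian polynomial is ${n\brack m}=\prod_{i=0}^{m-1}\frac{1-q^{n-i}}{1-q^{m-i}}$. For $n\geq 1$ and $0\le m\le n$, the $q$-Kaplansky number is $K_q(n,m)=\frac{1-q^{n+m}}{1-q^{n}}{n\brack m}$ (a polynomial in $q$). For a $(0,1)$-sequence $w=w_1w_2\cdots w_N$, $\mathrm{inv}(w)$ is the number of pairs $i<j$ with $w_i>w_j$, and $\mathrm{maj}(w)$ is the sum of all indices $i<N$ with $w_i>w_{i+1}$. $\mathcal{K}(m,n-m+1)$ is the set of $(0,1)$-sequences $w=w_1\cdots w_{n+1}$ of length $n+1$ with exactly $m$ ones and $n-m+1$ zeros such that if $w_{n+1}=1$ then $w_1=0$. $\overline{\mathcal{K}}(m,n-m+1)$ is the set of $(0,1)$-sequences $w=w_1\cdots w_{n+1}$ with exactly $m$ ones and $n-m+1$ zeros such that if $w_{n+1}=1$, then, letting $t=\max\{i: w_i=0\}$, either $t=1$ or ($t\ge 2$ and $w_{t-1}=0$). *)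

theory Defs
  imports "HOL-Computational_Algebra.Polynomial"
begin

text \<open>Polynomials in q are rational polynomials; q^k is monom 1 k.
  Fractions that are polynomials are rendered by exact polynomial division.\<close>

definition gauss_poly :: "nat \<Rightarrow> nat \<Rightarrow> rat poly" where
  "gauss_poly n m =
     (\<Prod>i<m. 1 - monom 1 (n - i)) div (\<Prod>i<m. 1 - monom 1 (m - i))"

definition kaplansky_poly :: "nat \<Rightarrow> nat \<Rightarrow> rat poly" where
  "kaplansky_poly n m = ((1 - monom 1 (n + m)) * gauss_poly n m) div (1 - monom 1 n)"

text \<open>(0,1)-sequences are lists over {0,1}; entry w_i (1-based) is w ! (i-1).\<close>

definition inv01 :: "nat list \<Rightarrow> nat" where
  "inv01 w = card {(i, j). i < j \<and> j < length w \<and> w ! i > w ! j}"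

definition maj01 :: "nat list \<Rightarrow> nat" where
  "maj01 w = (\<Sum>i\<in>{i. i + 1 < length w \<and> w ! i > w ! (i + 1)}. i + 1)"

definition seqs01 :: "nat \<Rightarrow> nat \<Rightarrow> nat list set" where
  "seqs01 a b = {w. length w = a + b \<and> set w \<subseteq> {0, 1} \<and>
                    length (filter (\<lambda>x. x = 1) w) = a \<and>
                    length (filter (\<lambda>x. x = 0) w) = b}"

definition Kset :: "nat \<Rightarrow> nat \<Rightarrow> nat list set" where
  "Kset a b = {w \<in> seqs01 a b. last w = 1 \<longrightarrow> w ! 0 = 0}"

text \<open>Kbar(a,b): if the last entry is 1, with t the (1-based) position of the last 0,
  either t = 1 or (t \<ge> 2 and w_{t-1} = 0). Here t0 = t - 1 is the 0-based position.\<close>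
definition Kbar :: "nat \<Rightarrow> nat \<Rightarrow> nat list set" where
  "Kbar a b = {w \<in> seqs01 a b. last w = 1 \<longrightarrow>
      (let t0 = Max {i. i < length w \<and> w ! i = 0}
       in t0 = 0 \<or> (t0 \<ge> 1 \<and> w ! (t0 - 1) = 0))}"

end

(*
  Classify words by their last letter. On words with a ones and b zeros, appending a 1 changes
  neither inv nor maj, and appending a 0 adds a to inv; so the q^inv generating function obeys the
  q-Pascal recurrence and is the Gaussian polynomial [a+b, a]. The same holds for q^maj, proved
  together with the fact that the words w0 contribute q^a [a+b, a].
  In K(a,b) and Kbar(a,b) the words ending in 0 are unrestricted and contribute q^a [a+b-1, a].
  Deleting the final 1 of the other words leaves the words starting with 0 (for inv), resp. the
  words whose last zero is not preceded by a one (for maj), and both families are counted by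
  [a+b-2, a-1]. Finally the q-factorial expression of Gaussian polynomials gives
  K_q(n, m) = q^m [n, m] + [n-1, m-1], the same expression at a = m, b = n-m+1.
*)
theory Submission
  imports Defs
begin

(* qbinom a b is the Gaussian polynomial [a+b, a]. *)

fun qbinom :: "nat \<Rightarrow> nat \<Rightarrow> 'a::comm_semiring_1 poly" where
  "qbinom 0 b = 1"
| "qbinom (Suc a) 0 = 1"
| "qbinom (Suc a) (Suc b) = qbinom a (Suc b) + monom 1 (Suc a) * qbinom (Suc a) b"

definition qfact :: "nat \<Rightarrow> 'a::comm_ring_1 poly" where
  "qfact k = (\<Prod>i=1..k. 1 - monom 1 i)"

lemma qfact_0 [simp]: "qfact 0 = 1"
  by (simp add: qfact_def)

lemma qfact_Suc: "qfact (Suc k) = qfact k * (1 - monom 1 (Suc k))"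
  by (simp add: qfact_def)

lemma one_minus_monom_nonzero:
  assumes "k > 0" shows "1 - monom (1::'a::comm_ring_1) k \<noteq> 0"
proof
  assume "1 - monom (1::'a) k = 0"
  then have "coeff (1 - monom (1::'a) k) 0 = 0" by simp
  with assms show False by simp
qed

lemma qfact_nonzero: "qfact k \<noteq> (0 :: 'a::idom poly)"
proof (induction k)
  case (Suc k)
  have "1 - monom (1::'a) (Suc k) \<noteq> 0" by (rule one_minus_monom_nonzero) simp
  with Suc.IH show ?case by (simp add: qfact_Suc)
qed simp

lemma qbinom_0_right [simp]: "qbinom a 0 = 1"
  by (cases a) simp_all

lemma qbinom_mult_qfact: "qbinom a b * qfact a * qfact b = (qfact (a + b) :: 'a::comm_ring_1 poly)"
proof (induction a b rule: qbinom.induct)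
  case (3 a b)
  let ?x = "monom (1::'a) (Suc a)" and ?y = "monom (1::'a) (Suc b)"
  have "qbinom (Suc a) (Suc b) * qfact (Suc a) * qfact (Suc b)
      = (qbinom a (Suc b) * qfact a * qfact (Suc b)) * (1 - ?x)
        + ?x * (qbinom (Suc a) b * qfact (Suc a) * qfact b) * (1 - ?y)"
    by (simp add: qfact_Suc algebra_simps)
  also have "\<dots> = qfact (Suc (a + b)) * (1 - ?x) + ?x * qfact (Suc (a + b)) * (1 - ?y)"
    by (simp only: "3.IH" add_Suc_right add_Suc)
  also have "\<dots> = qfact (Suc (a + b)) * (1 - ?x * ?y)"
    by (simp add: algebra_simps)
  also have "\<dots> = qfact (Suc a + Suc b)"
    by (simp add: qfact_Suc mult_monom)
  finally show ?case .
qed simp_all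

lemma qbinom_Suc_Suc':
  "qbinom (Suc a) (Suc b) = monom 1 (Suc b) * qbinom a (Suc b) + (qbinom (Suc a) b :: 'a::idom poly)"
proof -
  have "(1 - monom 1 (Suc b)) * qbinom a (Suc b) * (qfact a * qfact b)
      = qbinom a (Suc b) * qfact a * qfact (Suc b)"
    by (simp add: qfact_Suc algebra_simps)
  also have "\<dots> = qbinom (Suc a) b * qfact (Suc a) * qfact b"
    by (simp only: qbinom_mult_qfact) simp
  also have "\<dots> = (1 - monom 1 (Suc a)) * qbinom (Suc a) b * (qfact a * (qfact b :: 'a poly))"
    by (simp add: qfact_Suc algebra_simps)
  finally have "(1 - monom 1 (Suc b)) * qbinom a (Suc b) = (1 - monom 1 (Suc a)) * (qbinom (Suc a) b :: 'a poly)"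
    by (simp add: qfact_nonzero mult_right_cancel)
  then show ?thesis by (simp add: algebra_simps)
qed

lemma qbinom_pascal:
  "qbinom a b = (if a = 0 \<and> b = 0 then 1 else 0) + (if 0 < a then qbinom (a - 1) b else 0)
     + (if 0 < b then monom 1 a * qbinom a (b - 1) else 0)"
  by (cases a; cases b) simp_all

lemma qbinom_pascal':
  "qbinom a b = (if a = 0 \<and> b = 0 then 1 else 0) + (if 0 < a then monom 1 b * qbinom (a - 1) b else 0)
     + (if 0 < b then qbinom a (b - 1) else (0 :: 'a::idom poly))"
  by (cases a; cases b) (simp_all del: qbinom.simps(3) add: qbinom_Suc_Suc')

lemma prod_one_minus_monom_mult_qfact:
  "m \<le> n \<Longrightarrow> (\<Prod>i<m. 1 - monom 1 (n - i)) * qfact (n - m) = (qfact n :: 'a::comm_ring_1 poly)"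
proof (induction m)
  case (Suc m)
  then have "n - m = Suc (n - Suc m)" by simp
  with Suc show ?case by (simp add: qfact_Suc algebra_simps)
qed simp

lemma gauss_poly_eq_qbinom: "m \<le> n \<Longrightarrow> gauss_poly n m = qbinom m (n - m)"
proof -
  assume "m \<le> n"
  then have "(\<Prod>i<m. 1 - monom 1 (n - i)) * qfact (n - m) = qbinom m (n - m) * qfact m * (qfact (n - m) :: rat poly)"
    by (simp add: prod_one_minus_monom_mult_qfact qbinom_mult_qfact)
  then have "(\<Prod>i<m. 1 - monom 1 (n - i)) = qbinom m (n - m) * (qfact m :: rat poly)"
    by (simp add: qfact_nonzero mult_right_cancel)
  moreover have "(\<Prod>i<m. 1 - monom 1 (m - i)) = (qfact m :: rat poly)"
    using prod_one_minus_monom_mult_qfact[of m m] by simp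
  ultimately show ?thesis
    unfolding gauss_poly_def by (simp add: qfact_nonzero)
qed

lemma qbinom_Suc_left_absorb:
  "(1 - monom 1 (Suc a)) * qbinom (Suc a) b = (1 - monom 1 (Suc a + b)) * (qbinom a b :: 'a::idom poly)"
proof -
  have "(1 - monom 1 (Suc a)) * qbinom (Suc a) b * (qfact a * qfact b)
      = qbinom (Suc a) b * qfact (Suc a) * (qfact b :: 'a poly)"
    by (simp add: qfact_Suc algebra_simps)
  also have "\<dots> = qfact (Suc (a + b))"
    by (simp only: qbinom_mult_qfact) simp
  also have "\<dots> = (1 - monom 1 (Suc a + b)) * qbinom a b * (qfact a * qfact b)"
    by (simp only: qfact_Suc qbinom_mult_qfact[of a b, symmetric]) (simp add: algebra_simps)
  finally show ?thesis
    by (simp add: qfact_nonzero mult_right_cancel)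
qed

lemma kaplansky_poly_eq_qbinom:
  assumes "1 \<le> n" "m \<le> n"
  shows "kaplansky_poly n m = monom 1 m * qbinom m (n - m) + (if 0 < m then qbinom (m - 1) (n - m) else 0)"
proof -
  let ?E = "monom 1 m * qbinom m (n - m) + (if 0 < m then qbinom (m - 1) (n - m) else (0 :: rat poly))"
    and ?x = "monom (1::rat) m" and ?y = "monom (1::rat) n"
  have "(1 - ?x * ?y) * qbinom m (n - m) = ?E * (1 - ?y)"
  proof (cases m)
    case (Suc k)
    let ?B = "qbinom m (n - m)" and ?A = "qbinom k (n - m)"
    have absorb: "(1 - ?x) * ?B = (1 - ?y) * ?A"
      using qbinom_Suc_left_absorb[of k "n - m"] Suc assms(2) by simp
    have "?E * (1 - ?y) * (1 - ?x) = ?x * (1 - ?y) * ((1 - ?x) * ?B) + (1 - ?x) * ((1 - ?y) * ?A)"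
      using Suc by (simp add: algebra_simps)
    also have "\<dots> = (1 - ?x * ?y) * ?B * (1 - ?x)"
      unfolding absorb[symmetric] by (simp add: algebra_simps)
    finally have "(1 - ?x * ?y) * ?B * (1 - ?x) = ?E * (1 - ?y) * (1 - ?x)" ..
    moreover have "1 - ?x \<noteq> 0"
      by (rule one_minus_monom_nonzero) (simp add: Suc)
    ultimately show ?thesis
      by (simp add: mult_right_cancel)
  qed simp
  moreover have "1 - ?y \<noteq> 0"
    by (rule one_minus_monom_nonzero) (use assms in simp)
  ultimately show ?thesis
    unfolding kaplansky_poly_def gauss_poly_eq_qbinom[OF assms(2)] by (simp add: mult_monom add.commute)
qed

lemma finite_seqs01: "finite (seqs01 a b)"
proof (rule finite_subset)
  show "seqs01 a b \<subseteq> {w. set w \<subseteq> {0, 1} \<and> length w = a + b}"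
    unfolding seqs01_def by auto
  show "finite {w. set w \<subseteq> {0::nat, 1} \<and> length w = a + b}"
    by (rule finite_lists_length_eq) simp
qed

lemma seqs01_setD: "w \<in> seqs01 a b \<Longrightarrow> set w \<subseteq> {0, 1}"
  unfolding seqs01_def by auto

lemma length_seqs01: "w \<in> seqs01 a b \<Longrightarrow> length w = a + b"
  unfolding seqs01_def by auto

lemma zero_in_seqs01: "w \<in> seqs01 a b \<Longrightarrow> 0 < b \<Longrightarrow> 0 \<in> set w"
  unfolding seqs01_def by (auto simp: filter_empty_conv)

lemma Nil_in_seqs01_iff: "[] \<in> seqs01 a b \<longleftrightarrow> a = 0 \<and> b = 0"
  unfolding seqs01_def by auto

lemma snoc_in_seqs01_iff: "u @ [x] \<in> seqs01 a b \<longleftrightarrow>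
    (x = 1 \<and> 0 < a \<and> u \<in> seqs01 (a - 1) b) \<or> (x = 0 \<and> 0 < b \<and> u \<in> seqs01 a (b - 1))"
  unfolding seqs01_def by auto

lemma Cons_in_seqs01_iff: "x # u \<in> seqs01 a b \<longleftrightarrow>
    (x = 1 \<and> 0 < a \<and> u \<in> seqs01 (a - 1) b) \<or> (x = 0 \<and> 0 < b \<and> u \<in> seqs01 a (b - 1))"
  unfolding seqs01_def by auto

lemma seqs01_by_last: "seqs01 a b = (if a = 0 \<and> b = 0 then {[]} else {})
    \<union> (\<lambda>u. u @ [1]) ` (if 0 < a then seqs01 (a - 1) b else {})
    \<union> (\<lambda>u. u @ [0]) ` (if 0 < b then seqs01 a (b - 1) else {})"
proof (rule set_eqI)
  fix w :: "nat list"
  show "w \<in> seqs01 a b \<longleftrightarrow> w \<in> (if a = 0 \<and> b = 0 then {[]} else {})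
    \<union> (\<lambda>u. u @ [1]) ` (if 0 < a then seqs01 (a - 1) b else {})
    \<union> (\<lambda>u. u @ [0]) ` (if 0 < b then seqs01 a (b - 1) else {})"
    by (cases w rule: rev_exhaust) (auto simp: Nil_in_seqs01_iff snoc_in_seqs01_iff)
qed

lemma sum_seqs01_by_last: "(\<Sum>w\<in>seqs01 a b. f w) = (if a = 0 \<and> b = 0 then f [] else 0)
    + (if 0 < a then (\<Sum>u\<in>seqs01 (a - 1) b. f (u @ [1])) else 0)
    + (if 0 < b then (\<Sum>u\<in>seqs01 a (b - 1). f (u @ [0])) else 0)"
proof -
  let ?E = "if a = 0 \<and> b = 0 then {[]} else {}"
    and ?O = "(\<lambda>u. u @ [1]) ` (if 0 < a then seqs01 (a - 1) b else {})"
    and ?Z = "(\<lambda>u. u @ [0]) ` (if 0 < b then seqs01 a (b - 1) else {})"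
  have inj: "inj_on (\<lambda>u. u @ [x]) S" for x :: nat and S
    by (auto simp: inj_on_def)
  have "(\<Sum>w\<in>seqs01 a b. f w) = sum f ?E + sum f ?O + sum f ?Z"
    by (subst seqs01_by_last, subst sum.union_disjoint, auto simp: finite_seqs01 sum.union_disjoint)
  then show ?thesis
    by (simp add: sum.reindex[OF inj])
qed

lemma seqs01_0_0: "seqs01 0 0 = {[]}"
  using seqs01_by_last[of 0 0] by simp

lemma first_zero_seqs01:
  assumes "0 < b" shows "{u \<in> seqs01 a b. u ! 0 = 0} = (#) 0 ` seqs01 a (b - 1)"
proof (rule set_eqI)
  fix w :: "nat list"
  show "w \<in> {u \<in> seqs01 a b. u ! 0 = 0} \<longleftrightarrow> w \<in> (#) 0 ` seqs01 a (b - 1)"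
    using assms by (cases w) (auto simp: Nil_in_seqs01_iff Cons_in_seqs01_iff)
qed

lemma inv01_Nil [simp]: "inv01 [] = 0"
  by (simp add: inv01_def)

lemma inv01_snoc: "inv01 (u @ [x]) = inv01 u + card {i. i < length u \<and> u ! i > x}"
proof -
  let ?S = "{(i, j). i < j \<and> j < length u \<and> u ! i > u ! j}"
    and ?T = "(\<lambda>i. (i, length u)) ` {i. i < length u \<and> u ! i > x}"
  have "{(i, j). i < j \<and> j < length (u @ [x]) \<and> (u @ [x]) ! i > (u @ [x]) ! j} = ?S \<union> ?T"
    by (auto simp: nth_append less_Suc_eq)
  moreover have "finite ?S"
    by (rule finite_subset[of _ "{..<length u} \<times> {..<length u}"]) auto
  moreover have "?S \<inter> ?T = {}" by auto
  moreover have "card ?T = card {i. i < length u \<and> u ! i > x}"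
    by (rule card_image) (auto simp: inj_on_def)
  ultimately show ?thesis
    unfolding inv01_def by (simp add: card_Un_disjoint)
qed

lemma inv01_snoc_1: "u \<in> seqs01 a b \<Longrightarrow> inv01 (u @ [1]) = inv01 u"
proof -
  assume "u \<in> seqs01 a b"
  then have "{i. i < length u \<and> u ! i > 1} = {}"
    using seqs01_setD nth_mem by fastforce
  then show ?thesis by (simp add: inv01_snoc)
qed

lemma inv01_snoc_0: "u \<in> seqs01 a b \<Longrightarrow> inv01 (u @ [0]) = inv01 u + a"
proof -
  assume u: "u \<in> seqs01 a b"
  then have "{i. i < length u \<and> u ! i > 0} = {i. i < length u \<and> u ! i = 1}"
    using seqs01_setD[OF u] nth_mem[of _ u] by fastforce
  moreover have "card {i. i < length u \<and> u ! i = 1} = a"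
    using u unfolding seqs01_def length_filter_conv_card by blast
  ultimately show ?thesis
    by (simp add: inv01_snoc)
qed

lemma inv01_Cons_0: "inv01 (0 # v) = inv01 v"
proof -
  let ?S = "{(i, j). i < j \<and> j < length v \<and> v ! i > v ! j}"
  have "{(i, j). i < j \<and> j < length (0 # v) \<and> (0 # v) ! i > (0 # v) ! j}
      = (\<lambda>(i, j). (Suc i, Suc j)) ` ?S"
  proof (intro set_eqI iffI)
    fix p assume "p \<in> {(i, j). i < j \<and> j < length (0 # v) \<and> (0 # v) ! i > (0 # v) ! j}"
    then obtain i j where p: "p = (i, j)" "i < j" "j < Suc (length v)" "(0 # v) ! i > (0 # v) ! j"
      by auto
    then obtain i' j' where "i = Suc i'" "j = Suc j'"
      by (cases i; cases j) auto
    with p show "p \<in> (\<lambda>(i, j). (Suc i, Suc j)) ` ?S" by auto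
  qed auto
  moreover have "inj_on (\<lambda>(i, j). (Suc i, Suc j)) ?S"
    by (auto simp: inj_on_def)
  ultimately show ?thesis
    unfolding inv01_def by (simp add: card_image)
qed

lemma sum_inv01_snoc_1:
  "(\<Sum>u\<in>seqs01 a b. monom 1 (inv01 (u @ [1]))) = (\<Sum>u\<in>seqs01 a b. monom 1 (inv01 u))"
  by (rule sum.cong[OF refl]) (metis inv01_snoc_1)

lemma sum_inv01_snoc_0:
  "(\<Sum>u\<in>seqs01 a b. monom 1 (inv01 (u @ [0])))
    = monom 1 a * (\<Sum>u\<in>seqs01 a b. monom (1 :: 'a::comm_semiring_1) (inv01 u))"
  unfolding sum_distrib_left
  by (rule sum.cong) (simp_all add: inv01_snoc_0 mult_monom add.commute)

lemma sum_inv01_seqs01: "(\<Sum>w\<in>seqs01 a b. monom 1 (inv01 w)) = (qbinom a b :: 'a::comm_semiring_1 poly)"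
proof (induction "a + b" arbitrary: a b)
  case 0
  then show ?case by (simp add: seqs01_0_0)
next
  case (Suc N)
  have "(\<Sum>u\<in>seqs01 (a - 1) b. monom 1 (inv01 (u @ [1]))) = (qbinom (a - 1) b :: 'a poly)"
    if "0 < a"
    unfolding sum_inv01_snoc_1 using Suc that by simp
  moreover have "(\<Sum>u\<in>seqs01 a (b - 1). monom 1 (inv01 (u @ [0]))) = monom 1 a * (qbinom a (b - 1) :: 'a poly)"
    if "0 < b"
    unfolding sum_inv01_snoc_0 using Suc that by simp
  ultimately show ?case
    by (subst sum_seqs01_by_last, subst qbinom_pascal) (simp only: inv01_Nil monom_eq_1 cong: if_cong)
qed

lemma sum_inv01_first_zero:
  assumes "0 < b"
  shows "(\<Sum>u\<in>seqs01 a b. if u ! 0 = 0 then monom 1 (inv01 u) else 0) = (qbinom a (b - 1) :: 'a::comm_semiring_1 poly)"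
proof -
  have "(\<Sum>u\<in>seqs01 a b. if u ! 0 = 0 then monom 1 (inv01 u) else 0)
      = (\<Sum>u\<in>{u \<in> seqs01 a b. u ! 0 = 0}. monom (1 :: 'a) (inv01 u))"
    by (rule sum.inter_filter[OF finite_seqs01, symmetric])
  also have "\<dots> = (\<Sum>v\<in>seqs01 a (b - 1). monom 1 (inv01 (0 # v)))"
    by (simp add: first_zero_seqs01[OF assms] sum.reindex)
  also have "\<dots> = qbinom a (b - 1)"
    by (simp add: inv01_Cons_0 sum_inv01_seqs01)
  finally show ?thesis .
qed

lemma sum_inv01_Kset:
  assumes "0 < b"
  shows "(\<Sum>w\<in>Kset a b. monom 1 (inv01 w))
    = monom 1 a * qbinom a (b - 1) + (if 0 < a then qbinom (a - 1) (b - 1) else (0 :: 'a::comm_semiring_1 poly))"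
proof -
  let ?f = "\<lambda>w. if last w = 1 \<longrightarrow> w ! 0 = 0 then monom 1 (inv01 w) else (0 :: 'a poly)"
  have "(\<Sum>w\<in>Kset a b. monom 1 (inv01 w)) = (\<Sum>w\<in>seqs01 a b. ?f w)"
    unfolding Kset_def by (rule sum.inter_filter[OF finite_seqs01])
  also have "\<dots> = (if 0 < a then (\<Sum>u\<in>seqs01 (a - 1) b. ?f (u @ [1])) else 0)
      + (\<Sum>u\<in>seqs01 a (b - 1). ?f (u @ [0]))"
    using assms by (subst sum_seqs01_by_last) simp
  also have "(\<Sum>u\<in>seqs01 a (b - 1). ?f (u @ [0])) = monom 1 a * qbinom a (b - 1)"
    by (simp add: sum_inv01_snoc_0 sum_inv01_seqs01)
  also have "(\<Sum>u\<in>seqs01 (a - 1) b. ?f (u @ [1]))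
      = (\<Sum>u\<in>seqs01 (a - 1) b. if u ! 0 = 0 then monom 1 (inv01 u) else 0)"
  proof (rule sum.cong[OF refl])
    fix u assume u: "u \<in> seqs01 (a - 1) b"
    then have "u \<noteq> []"
      using assms length_seqs01 by fastforce
    then show "?f (u @ [1]) = (if u ! 0 = 0 then monom 1 (inv01 u) else 0)"
      using inv01_snoc_1[OF u] by (simp add: nth_append)
  qed
  finally show ?thesis
    using assms by (simp add: sum_inv01_first_zero add.commute)
qed

lemma maj01_Nil [simp]: "maj01 [] = 0"
  by (simp add: maj01_def)

lemma maj01_snoc: "maj01 (u @ [x]) = maj01 u + (if u \<noteq> [] \<and> last u > x then length u else 0)"
proof -
  let ?S = "{i. i + 1 < length u \<and> u ! i > u ! (i + 1)}"
  have descents: "{i. i + 1 < length (u @ [x]) \<and> (u @ [x]) ! i > (u @ [x]) ! (i + 1)}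
      = ?S \<union> (if u \<noteq> [] \<and> last u > x then {length u - 1} else {})"
    by (cases u rule: rev_exhaust) (auto simp: nth_append less_Suc_eq)
  have "finite ?S"
    by (rule finite_subset[of _ "{..<length u}"]) auto
  moreover have "length u - 1 \<notin> ?S"
    by auto
  ultimately show ?thesis
    unfolding maj01_def descents by (cases "u \<noteq> [] \<and> last u > x") auto
qed

lemma maj01_singleton [simp]: "maj01 [x] = 0"
  using maj01_snoc[of "[]" x] by simp

lemma maj01_snoc_1: "u \<in> seqs01 a b \<Longrightarrow> maj01 (u @ [1]) = maj01 u"
proof -
  assume "u \<in> seqs01 a b"
  then have "u \<noteq> [] \<Longrightarrow> last u \<in> {0, 1}"
    using seqs01_setD last_in_set by blast
  then show ?thesis
    by (auto simp: maj01_snoc)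
qed

lemma maj01_snoc_0_0: "maj01 ((u @ [0]) @ [0]) = maj01 (u @ [0])"
  using maj01_snoc[of "u @ [0]" 0] by simp

lemma maj01_snoc_1_0: "u \<in> seqs01 a b \<Longrightarrow> maj01 ((u @ [1]) @ [0]) = maj01 u + Suc (a + b)"
  using maj01_snoc[of "u @ [1]" 0] maj01_snoc_1[of u a b] length_seqs01[of u a b] by simp

lemma sum_maj01_snoc_1:
  "(\<Sum>u\<in>seqs01 a b. monom 1 (maj01 (u @ [1]))) = (\<Sum>u\<in>seqs01 a b. monom 1 (maj01 u))"
  by (rule sum.cong[OF refl]) (metis maj01_snoc_1)

lemma sum_maj01_snoc_1_0:
  "(\<Sum>u\<in>seqs01 a b. monom 1 (maj01 ((u @ [1]) @ [0])))
    = monom 1 (Suc (a + b)) * (\<Sum>u\<in>seqs01 a b. monom (1 :: 'a::comm_semiring_1) (maj01 u))"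
  unfolding sum_distrib_left
  by (rule sum.cong) (simp_all only: maj01_snoc_1_0 mult_monom mult_1 add.commute)

lemma sum_maj01_seqs01:
  shows "(\<Sum>w\<in>seqs01 a b. monom 1 (maj01 w)) = (qbinom a b :: 'a::idom poly)"
    and "(\<Sum>w\<in>seqs01 a b. monom 1 (maj01 (w @ [0]))) = monom 1 a * (qbinom a b :: 'a poly)"
proof (induction "a + b" arbitrary: a b)
  case 0
  { case 1 show ?case using 0 by (simp add: seqs01_0_0) }
  { case 2 show ?case using 0 by (simp add: seqs01_0_0) }
next
  case (Suc N)
  have ones: "(\<Sum>u\<in>seqs01 (a - 1) b. monom 1 (maj01 (u @ [1]))) = (qbinom (a - 1) b :: 'a poly)"
    if "0 < a"
    unfolding sum_maj01_snoc_1 using Suc.hyps that by simp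
  have zeros: "(\<Sum>u\<in>seqs01 a (b - 1). monom 1 (maj01 (u @ [0]))) = monom 1 a * (qbinom a (b - 1) :: 'a poly)"
    if "0 < b"
    using Suc.hyps that by simp
  { case 1
    show ?case
      by (subst sum_seqs01_by_last, subst qbinom_pascal) (simp only: ones zeros maj01_Nil monom_eq_1 cong: if_cong)
  }
  { case 2
    have "(\<Sum>u\<in>seqs01 (a - 1) b. monom 1 (maj01 ((u @ [1]) @ [0])))
        = monom 1 a * (monom 1 b * (qbinom (a - 1) b :: 'a poly))"
      if "0 < a"
      unfolding sum_maj01_snoc_1_0 using Suc.hyps that by (simp add: mult_monom mult.assoc)
    moreover have "(\<Sum>u\<in>seqs01 a (b - 1). monom 1 (maj01 ((u @ [0]) @ [0]))) = monom 1 a * (qbinom a (b - 1) :: 'a poly)"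
      if "0 < b"
      unfolding maj01_snoc_0_0 using zeros[OF that] .
    ultimately show ?case
      by (subst sum_seqs01_by_last, subst qbinom_pascal')
        (simp only: append_Nil maj01_singleton distrib_left if_distrib[of "(*) (monom 1 a)"]
          mult_zero_right mult_1_right cong: if_cong)
  }
qed

lemma sum_maj01_ending_in_zero:
  "(\<Sum>v\<in>seqs01 a b. if v = [] \<or> last v = 0 then monom 1 (maj01 v) else 0)
    = (if a = 0 \<and> b = 0 then 1 else 0) + (if 0 < b then monom 1 a * qbinom a (b - 1) else (0 :: 'a::idom poly))"
  by (subst sum_seqs01_by_last) (simp add: sum_maj01_seqs01(2))

definition last_zero_not_after_one :: "nat list \<Rightarrow> bool" where
  "last_zero_not_after_one w \<longleftrightarrow> (let t = Max {i. i < length w \<and> w ! i = 0} in t = 0 \<or> w ! (t - 1) = 0)"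

lemma Kbar_eq: "Kbar a b = {w \<in> seqs01 a b. last w = 1 \<longrightarrow> last_zero_not_after_one w}"
  unfolding Kbar_def last_zero_not_after_one_def Let_def by auto

lemma last_zero_not_after_one_snoc_1:
  assumes "0 \<in> set u" shows "last_zero_not_after_one (u @ [1]) = last_zero_not_after_one u"
proof -
  let ?Z = "{i. i < length u \<and> u ! i = 0}"
  have zeros: "{i. i < length (u @ [1]) \<and> (u @ [1]) ! i = 0} = ?Z"
    by (auto simp: nth_append less_Suc_eq)
  have "Max ?Z \<in> ?Z"
    using assms by (intro Max_in) (auto simp: in_set_conv_nth)
  then have "Max ?Z - 1 < length u"
    by auto
  then have "(u @ [1]) ! (Max ?Z - 1) = u ! (Max ?Z - 1)"
    by (simp add: nth_append)
  then show ?thesis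
    unfolding last_zero_not_after_one_def zeros Let_def by simp
qed

lemma last_zero_not_after_one_snoc_0: "last_zero_not_after_one (u @ [0]) \<longleftrightarrow> u = [] \<or> last u = 0"
proof -
  have last_zero: "Max {i. i < length (u @ [0]) \<and> (u @ [0]) ! i = 0} = length u"
    by (rule Max_eqI) (auto simp: nth_append)
  show ?thesis
  proof (cases "u = []")
    case False
    then have "(u @ [0]) ! (length u - 1) = last u"
      by (simp add: nth_append last_conv_nth)
    with False show ?thesis
      unfolding last_zero_not_after_one_def Let_def last_zero by simp
  qed (simp add: last_zero_not_after_one_def)
qed

lemma sum_maj01_last_zero_not_after_one_snoc_1:
  assumes "0 < b"
  shows "(\<Sum>u\<in>seqs01 a b. if last_zero_not_after_one (u @ [1]) then monom 1 (maj01 (u @ [1])) else 0)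
    = (\<Sum>u\<in>seqs01 a b. if last_zero_not_after_one u then monom 1 (maj01 u) else (0 :: 'a::comm_semiring_1 poly))"
proof (rule sum.cong[OF refl])
  fix u assume u: "u \<in> seqs01 a b"
  show "(if last_zero_not_after_one (u @ [1]) then monom 1 (maj01 (u @ [1])) else 0)
    = (if last_zero_not_after_one u then monom 1 (maj01 u) else (0 :: 'a poly))"
    using last_zero_not_after_one_snoc_1[OF zero_in_seqs01[OF u assms]] maj01_snoc_1[OF u] by simp
qed

lemma sum_maj01_last_zero_not_after_one:
  assumes "0 < b"
  shows "(\<Sum>u\<in>seqs01 a b. if last_zero_not_after_one u then monom 1 (maj01 u) else 0)
    = (qbinom a (b - 1) :: 'a::idom poly)"
proof (induction a rule: less_induct)
  case (less a)
  let ?f = "\<lambda>u. if last_zero_not_after_one u then monom 1 (maj01 u) else (0 :: 'a poly)"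
  have ones: "(\<Sum>u\<in>seqs01 (a - 1) b. ?f (u @ [1])) = qbinom (a - 1) (b - 1)" if "0 < a"
    unfolding sum_maj01_last_zero_not_after_one_snoc_1[OF assms] using less that by simp
  have "(\<Sum>u\<in>seqs01 a (b - 1). ?f (u @ [0]))
      = (\<Sum>v\<in>seqs01 a (b - 1). if v = [] \<or> last v = 0 then monom 1 (maj01 v) else 0)"
    by (rule sum.cong[OF refl]) (simp add: last_zero_not_after_one_snoc_0 maj01_snoc)
  also have "\<dots> = (if a = 0 \<and> b - 1 = 0 then 1 else 0)
      + (if 0 < b - 1 then monom 1 a * qbinom a (b - 1 - 1) else 0)"
    by (rule sum_maj01_ending_in_zero)
  finally have zeros: "(\<Sum>u\<in>seqs01 a (b - 1). ?f (u @ [0])) = \<dots>" .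
  have "(\<Sum>u\<in>seqs01 a b. ?f u)
      = (if 0 < a then (\<Sum>u\<in>seqs01 (a - 1) b. ?f (u @ [1])) else 0) + (\<Sum>u\<in>seqs01 a (b - 1). ?f (u @ [0]))"
    using assms by (subst sum_seqs01_by_last) simp
  also have "\<dots> = (if 0 < a then qbinom (a - 1) (b - 1) else 0) + (if a = 0 \<and> b - 1 = 0 then 1 else 0)
      + (if 0 < b - 1 then monom 1 a * qbinom a (b - 1 - 1) else 0)"
    by (simp only: ones zeros add.assoc cong: if_cong)
  also have "\<dots> = qbinom a (b - 1)"
    by (subst qbinom_pascal[of a "b - 1"]) (simp add: add_ac)
  finally show ?case .
qed

lemma sum_maj01_Kbar:
  assumes "0 < b"
  shows "(\<Sum>w\<in>Kbar a b. monom 1 (maj01 w))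
    = monom 1 a * qbinom a (b - 1) + (if 0 < a then qbinom (a - 1) (b - 1) else (0 :: 'a::idom poly))"
proof -
  let ?f = "\<lambda>w. if last w = 1 \<longrightarrow> last_zero_not_after_one w then monom 1 (maj01 w) else (0 :: 'a poly)"
  have "(\<Sum>w\<in>Kbar a b. monom 1 (maj01 w)) = (\<Sum>w\<in>seqs01 a b. ?f w)"
    unfolding Kbar_eq by (rule sum.inter_filter[OF finite_seqs01])
  also have "\<dots> = (if 0 < a then (\<Sum>u\<in>seqs01 (a - 1) b. ?f (u @ [1])) else 0)
      + (\<Sum>u\<in>seqs01 a (b - 1). ?f (u @ [0]))"
    using assms by (subst sum_seqs01_by_last) simp
  also have "(\<Sum>u\<in>seqs01 a (b - 1). ?f (u @ [0])) = monom 1 a * qbinom a (b - 1)"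
    by (simp add: sum_maj01_seqs01(2))
  also have "(\<Sum>u\<in>seqs01 (a - 1) b. ?f (u @ [1]))
      = (\<Sum>u\<in>seqs01 (a - 1) b. if last_zero_not_after_one u then monom 1 (maj01 u) else 0)"
    using sum_maj01_last_zero_not_after_one_snoc_1[OF assms] by simp
  finally show ?thesis
    using assms by (simp add: sum_maj01_last_zero_not_after_one add.commute)
qed

theorem theorem1p1:
  fixes n m :: nat
  assumes "1 \<le> n" and "m \<le> n"
  shows "kaplansky_poly n m = (\<Sum>w\<in>Kset m (n - m + 1). monom 1 (inv01 w))
       \<and> kaplansky_poly n m = (\<Sum>w\<in>Kbar m (n - m + 1). monom 1 (maj01 w))"
proof -
  have b: "0 < n - m + 1"
    by simp
  show ?thesis
    unfolding kaplansky_poly_eq_qbinom[OF assms] sum_inv01_Kset[OF b] sum_maj01_Kbar[OF b] by simp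
qed

end
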